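(* Let $\phi,\tilde\phi:\mathbb{R}\to(0,1)$ be differentiable, strictly increasing, surjective functions whose derivatives are each monotone on $(z_0,\infty)$ for some $z_0\ge 0$. Suppose $\phi$ has a higher order of saturation than $\tilde\phi$, i.e. (i) $\lim_{z\to\infty}\frac{1-\phi(z)}{1-\tilde\phi(az)}=0$ for every $a>0$, and (ii) the function $z\mapsto\tilde\phi^{-1}(\phi(z))$ is convex on $(z_1,\infty)$ for some $z_1\in\mathbb R$. Define $g_\phi(f):=\phi'(\phi^{-1}(f))$ and $g_{\tilde\phi}(f):=\tilde\phi'(\tilde\phi^{-1}(f))$ for $f\in(0,1)$. Then $g_\phi(f)/g_{\tilde\phi}(f)\to\infty$ as $f\to 1^-$.
   Context: $\phi^{-1},\tilde\phi^{-1}:(0,1)\to\mathbb R$ denote the inverse functions. The quantity $g_\phi(f)$ is the derivative of the gate function expressed as a function of its output value $f$; under gradient flow on a parameter $z$ with loss $L$, the output $f=\phi(z)$ evolves by $df/d\tau=-g_\phi(f)^2\,\partial L/\partial f$. *)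

theory Defs
  imports "HOL-Analysis.Analysis"
begin

definition gate_g :: "(real \<Rightarrow> real) \<Rightarrow> real \<Rightarrow> real" where
  "gate_g \<phi> f = deriv \<phi> (inv \<phi> f)"

end

theory Submission
  imports Defs
begin

text \<open>Put \<open>h = \<psi>\<^sup>-\<^sup>1 \<circ> \<phi>\<close>. By the inverse function rule
  \<open>h'(z) = g\<^sub>\<phi>(\<phi> z) / g\<^sub>\<psi>(\<phi> z)\<close>, and \<open>\<phi> z \<rightarrow> 1\<^sup>-\<close> as \<open>z \<rightarrow> \<infinity>\<close>, so it suffices
  that \<open>h' \<rightarrow> \<infinity>\<close>. The saturation hypothesis implies that \<open>h\<close> eventually exceeds
  every linear function \<open>a z\<close>, and a convex function growing faster than every linear
  function has a derivative tending to infinity, by comparing it with its tangents.\<close>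

lemma strict_mono_deriv_pos_if_monotone_deriv:
  fixes f :: "real \<Rightarrow> real"
  assumes mono_f: "strict_mono f"
    and diff_f: "\<And>x. f differentiable (at x)"
    and mono_deriv: "mono_on {z0<..} (deriv f) \<or> antimono_on {z0<..} (deriv f)"
    and "z0 < c"
  shows "deriv f c > 0"
proof (rule ccontr)
  have der: "(f has_real_derivative deriv f x) (at x)" for x
    using diff_f DERIV_deriv_iff_real_differentiable by blast
  assume "\<not> deriv f c > 0"
  then have "deriv f c \<le> 0" by simp
  \<comment> \<open>By monotonicity \<open>f' \<le> 0\<close> on a whole interval on one side of \<open>c\<close>, where \<open>f\<close> cannot increase.\<close>
  then obtain a b where "a < b" and nonpos: "\<And>x. a \<le> x \<Longrightarrow> x \<le> b \<Longrightarrow> deriv f x \<le> 0"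
  proof (cases "mono_on {z0<..} (deriv f)")
    case True
    show ?thesis
    proof (rule that[of "(z0 + c) / 2" c])
      fix x assume "(z0 + c) / 2 \<le> x" "x \<le> c"
      then show "deriv f x \<le> 0"
        using mono_onD[OF True, of x c] \<open>z0 < c\<close> \<open>deriv f c \<le> 0\<close> by auto
    qed (use \<open>z0 < c\<close> in simp)
  next
    case False
    with mono_deriv have anti: "antimono_on {z0<..} (deriv f)" by blast
    show ?thesis
    proof (rule that[of c "c + 1"])
      fix x assume "c \<le> x" "x \<le> c + 1"
      then show "deriv f x \<le> 0"
        using monotone_onD[OF anti, of c x] \<open>z0 < c\<close> \<open>deriv f c \<le> 0\<close> by auto
    qed simp
  qed
  have "f b \<le> f a"
  proof (rule DERIV_nonpos_imp_nonincreasing[where f = f])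
    fix x assume "a \<le> x" "x \<le> b"
    then show "\<exists>y. (f has_real_derivative y) (at x) \<and> y \<le> 0"
      using der nonpos by blast
  qed (use \<open>a < b\<close> in simp)
  with \<open>a < b\<close> mono_f show False
    by (simp add: strict_mono_less_eq)
qed

lemma has_real_derivative_inv_comp_gate_g:
  fixes \<phi> \<psi> :: "real \<Rightarrow> real"
  assumes "inj \<phi>" and "inj \<psi>"
    and diff_\<psi>: "\<And>x. \<psi> differentiable (at x)"
    and diff_\<phi>: "\<phi> differentiable (at z)"
    and "\<phi> z \<in> range \<psi>"
    and "deriv \<psi> (inv \<psi> (\<phi> z)) \<noteq> 0"
  shows "((\<lambda>z. inv \<psi> (\<phi> z)) has_real_derivative gate_g \<phi> (\<phi> z) / gate_g \<psi> (\<phi> z)) (at z)"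
proof -
  define y where "y = inv \<psi> (\<phi> z)"
  have \<psi>y: "\<psi> y = \<phi> z"
    unfolding y_def using \<open>\<phi> z \<in> range \<psi>\<close> by (simp add: f_inv_into_f)
  have "(inv \<psi> has_real_derivative inverse (deriv \<psi> y)) (at (\<psi> y))"
    unfolding has_field_derivative_def
  proof (rule has_derivative_inverse_strong[where S = UNIV and f = \<psi> and x = y])
    show "(\<psi> has_derivative (*) (deriv \<psi> y)) (at y)"
      using diff_\<psi> DERIV_deriv_iff_real_differentiable has_field_derivative_def by blast
    show "continuous_on UNIV \<psi>"
      using diff_\<psi> by (simp add: continuous_at_imp_continuous_on differentiable_imp_continuous_within)
    show "(*) (deriv \<psi> y) \<circ> (*) (inverse (deriv \<psi> y)) = id"
      using assms(6) by (simp add: y_def fun_eq_iff)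
  qed (use \<open>inj \<psi>\<close> in auto)
  moreover have "(\<phi> has_real_derivative deriv \<phi> z) (at z)"
    using diff_\<phi> DERIV_deriv_iff_real_differentiable by blast
  ultimately have "((\<lambda>z. inv \<psi> (\<phi> z)) has_real_derivative deriv \<phi> z / deriv \<psi> y) (at z)"
    unfolding \<psi>y by (rule DERIV_chain2[THEN DERIV_cong]) (simp add: field_simps)
  then show ?thesis
    using \<open>inj \<phi>\<close> by (simp add: gate_g_def y_def)
qed

lemma eventually_linear_less_inv_comp:
  fixes \<phi> \<psi> :: "real \<Rightarrow> real"
  assumes "strict_mono \<psi>" and "\<And>x. \<psi> x < 1" and "range \<phi> \<subseteq> range \<psi>"
    and "((\<lambda>z. (1 - \<phi> z) / (1 - \<psi> (a * z))) \<longlongrightarrow> 0) at_top"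
  shows "eventually (\<lambda>z. a * z < inv \<psi> (\<phi> z)) at_top"
  using order_tendstoD(2)[OF assms(4) zero_less_one]
proof (rule eventually_mono)
  fix z
  assume "(1 - \<phi> z) / (1 - \<psi> (a * z)) < 1"
  then have "\<psi> (a * z) < \<phi> z"
    using assms(2)[of "a * z"] by (simp add: pos_divide_less_eq)
  also have "\<phi> z = \<psi> (inv \<psi> (\<phi> z))"
    using assms(3) by (metis f_inv_into_f rangeI subsetD)
  finally show "a * z < inv \<psi> (\<phi> z)"
    using \<open>strict_mono \<psi>\<close> by (simp add: strict_mono_less)
qed

lemma filterlim_deriv_at_top_if_convex_superlinear:
  fixes h D :: "real \<Rightarrow> real"
  assumes convex: "convex_on {z1<..} h"
    and deriv: "eventually (\<lambda>z. (h has_real_derivative D z) (at z)) at_top"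
    and superlinear: "\<And>a. a > 0 \<Longrightarrow> eventually (\<lambda>z. a * z < h z) at_top"
  shows "filterlim D at_top at_top"
  unfolding filterlim_at_top
proof
  fix B :: real
  obtain w where w: "\<And>z. z \<ge> w \<Longrightarrow> (h has_real_derivative D z) (at z)"
    using deriv by (auto simp: eventually_at_top_linorder)
  define c where "c = max (z1 + 1) w"
  define a where "a = \<bar>B\<bar> + 1"
  have "a > 0" by (simp add: a_def)
  have "eventually (\<lambda>z. a * z < h z \<and> z \<ge> max (c + 1) (h c - \<bar>B\<bar> * c)) at_top"
    using superlinear[OF \<open>a > 0\<close>] eventually_ge_at_top by (rule eventually_conj)
  then show "eventually (\<lambda>z. B \<le> D z) at_top"
  proof (rule eventually_mono)
    fix z
    assume z: "a * z < h z \<and> z \<ge> max (c + 1) (h c - \<bar>B\<bar> * c)"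
    then have "z > c" "z \<ge> w" "z > z1"
      unfolding c_def by auto
    \<comment> \<open>\<open>h\<close> lies above its tangent at \<open>z\<close>, in particular at the fixed point \<open>c\<close>.\<close>
    have "h c - h z \<ge> D z * (c - z)"
      using \<open>z > z1\<close> w[OF \<open>z \<ge> w\<close>]
      by (intro convex_on_imp_above_tangent[OF convex])
        (auto simp: c_def interior_open intro: has_field_derivative_at_within)
    then have "\<bar>B\<bar> * (z - c) \<le> D z * (z - c)"
      using z by (simp add: a_def algebra_simps)
    then have "\<bar>B\<bar> \<le> D z"
      using \<open>z > c\<close> by simp
    then show "B \<le> D z" by linarith
  qed
qed

lemma filterlim_inv_at_top_at_left:
  fixes \<phi> :: "real \<Rightarrow> real"
  assumes "strict_mono \<phi>" and "range \<phi> = {a<..<b}"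
  shows "filterlim (inv \<phi>) at_top (at_left b)"
  unfolding filterlim_at_top
proof
  fix B
  have "\<phi> B \<in> {a<..<b}" using assms(2) by blast
  then have "eventually (\<lambda>f. f \<in> {\<phi> B<..<b}) (at_left b)"
    by (intro eventually_at_left_real) simp
  then show "eventually (\<lambda>f. B \<le> inv \<phi> f) (at_left b)"
  proof (rule eventually_mono)
    fix f assume f: "f \<in> {\<phi> B<..<b}"
    then have "f \<in> range \<phi>"
      using assms(2) \<open>\<phi> B \<in> {a<..<b}\<close> by auto
    then have "\<phi> B < \<phi> (inv \<phi> f)"
      using f by (simp add: f_inv_into_f)
    then show "B \<le> inv \<phi> f"
      using \<open>strict_mono \<phi>\<close> by (simp add: strict_mono_less)
  qed
qed

theorem theorem1:
  fixes \<phi> \<psi> :: "real \<Rightarrow> real"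
  assumes diff_phi: "\<And>z. \<phi> differentiable (at z)"
    and diff_psi: "\<And>z. \<psi> differentiable (at z)"
    and mono_phi: "strict_mono \<phi>"
    and mono_psi: "strict_mono \<psi>"
    and range_phi: "range \<phi> = {0<..<1}"
    and range_psi: "range \<psi> = {0<..<1}"
    and dmono_phi: "\<exists>z0\<ge>0. mono_on {z0<..} (deriv \<phi>) \<or> antimono_on {z0<..} (deriv \<phi>)"
    and dmono_psi: "\<exists>z0\<ge>0. mono_on {z0<..} (deriv \<psi>) \<or> antimono_on {z0<..} (deriv \<psi>)"
    and sat: "\<And>a. a > 0 \<Longrightarrow> ((\<lambda>z. (1 - \<phi> z) / (1 - \<psi> (a * z))) \<longlongrightarrow> 0) at_top"
    and cvx: "\<exists>z1. convex_on {z1<..} (\<lambda>z. inv \<psi> (\<phi> z))"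
  shows "filterlim (\<lambda>f. gate_g \<phi> f / gate_g \<psi> f) at_top (at_left 1)"
proof -
  define ratio where "ratio f = gate_g \<phi> f / gate_g \<psi> f" for f
  obtain z0 where z0: "mono_on {z0<..} (deriv \<psi>) \<or> antimono_on {z0<..} (deriv \<psi>)"
    using dmono_psi by blast
  have superlinear: "eventually (\<lambda>z. a * z < inv \<psi> (\<phi> z)) at_top" if "a > 0" for a
    using range_phi range_psi
    by (intro eventually_linear_less_inv_comp[OF mono_psi _ _ sat[OF that]]) auto
  have deriv_psi_pos: "deriv \<psi> x \<noteq> 0" if "z0 < x" for x
    using strict_mono_deriv_pos_if_monotone_deriv[OF mono_psi diff_psi z0 that] by simp
  have "eventually (\<lambda>z. z0 < inv \<psi> (\<phi> z)) at_top"
    using eventually_conj[OF superlinear[of 1] eventually_gt_at_top[of z0]]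
    by (rule eventually_mono) auto
  then have "eventually (\<lambda>z. ((\<lambda>z. inv \<psi> (\<phi> z)) has_real_derivative ratio (\<phi> z)) (at z)) at_top"
    unfolding ratio_def using range_phi range_psi
    by (elim eventually_mono, intro has_real_derivative_inv_comp_gate_g)
      (auto simp: strict_mono_imp_inj_on mono_phi mono_psi diff_phi diff_psi deriv_psi_pos)
  then have "filterlim (\<lambda>z. ratio (\<phi> z)) at_top at_top"
    using cvx superlinear by (elim exE filterlim_deriv_at_top_if_convex_superlinear) auto
  then have "filterlim (\<lambda>f. ratio (\<phi> (inv \<phi> f))) at_top (at_left 1)"
    using filterlim_inv_at_top_at_left[OF mono_phi range_phi] by (rule filterlim_compose)
  moreover have "eventually (\<lambda>f. ratio (\<phi> (inv \<phi> f)) = ratio f) (at_left 1)"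
    using eventually_at_left_real[OF zero_less_one] range_phi
    by (elim eventually_mono) (simp add: f_inv_into_f)
  ultimately show ?thesis
    unfolding ratio_def by (rule filterlim_cong[OF refl refl, THEN iffD1, rotated])
qed

end
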